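(* Under Plurality, $2$-by-$2$ GS-games of types (ii), (iii), (iv) and (v) are realizable, while $2$-by-$2$ GS-games of types (i) and (vi) are not realizable. That is, for each of the types (ii)–(v) there exist a finite candidate set, a tie-breaking order, a profile $V$ and a $2$-by-$2$ GS-game for $V$ under Plurality of that type, and no $2$-by-$2$ GS-game under Plurality (for any candidate set, tie-breaking order and profile) is of type (i) or (vi).
   Context: Each voter $i$ has a strict linear order $v_i$ over the candidate set $C$. Plurality: each candidate gets one point from each voter ranking her first; the highest score wins, ties broken in favour of the candidate highest in a fixed strict linear order $>$ on $C$. Write $\mathcal{R}$ for the rule and $(V_{-i},v_i')$ for $V$ with $v_i$ replaced by $v_i'$. A GS-manipulation of voter $i$ at $V$ is a vote $v_i'$ such that $i$ strictly prefers $\mathcal{R}(V_{-i},v_i')$ to $\mathcal{R}(V)$ and for every vote $v_i''$ either $\mathcal{R}(V_{-i},v_i'')=\mathcal{R}(V_{-i},v_i')$ or $i$ strictly prefers $\mathcal{R}(V_{-i},v_i')$ to $\mathcal{R}(V_{-i},v_i'')$; $i$ is a GS-manipulator if he has one. A GS-game for $V$ has as players all GS-manipulators at $V$, each player $i$ having action set consisting of $v_i$ and a subset of his GS-manipulations; other voters vote sincerely; players compare action profiles by their preferences over the resulting winners. A $2$-by-$2$ GS-game is one with exactly two players $1,2$ (i.e. exactly two GS-manipulators at $V$), with action sets $\{s_1,i_1\}$ and $\{s_2,i_2\}$ where $s_p=v_p$ is the sincere vote and $i_p$ a GS-manipulation. Let $W(a,b)$ be the winner when player 1 plays $a$ and player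 2 plays $b$. Define $\rho_1=+$ if player 1 strictly prefers $W(i_1,i_2)$ to $W(s_1,i_2)$, $\rho_1=0$ if $W(i_1,i_2)=W(s_1,i_2)$, $\rho_1=-$ if player 1 strictly prefers $W(s_1,i_2)$ to $W(i_1,i_2)$; define $\rho_2$ analogously for player 2 comparing $W(i_1,i_2)$ with $W(i_1,s_2)$. The type of the game is determined by the unordered pair $\{\rho_1,\rho_2\}$: type (i) $\{+,+\}$, (ii) $\{-,-\}$, (iii) $\{0,0\}$, (iv) $\{+,0\}$, (v) $\{-,0\}$, (vi) $\{+,-\}$. *)

theory Defs
  imports Main
begin

(* A vote (strict linear order over the candidate set C) is a list of all
   candidates without repetition; earlier = more preferred.
   The tie-breaking order > is represented the same way (earlier = higher). *)
definition is_vote :: "'c set \<Rightarrow> 'c list \<Rightarrow> bool" where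
  "is_vote C v \<longleftrightarrow> distinct v \<and> set v = C"

definition prefers :: "'c list \<Rightarrow> 'c \<Rightarrow> 'c \<Rightarrow> bool" where
  "prefers v a b \<longleftrightarrow> (\<exists>j k. j < k \<and> k < length v \<and> v ! j = a \<and> v ! k = b)"

definition valid_election :: "'c set \<Rightarrow> 'c list \<Rightarrow> 'c list list \<Rightarrow> bool" where
  "valid_election C tb V \<longleftrightarrow> finite C \<and> C \<noteq> {} \<and> is_vote C tb \<and> (\<forall>v\<in>set V. is_vote C v)"

definition plur_score :: "'c list list \<Rightarrow> 'c \<Rightarrow> nat" where
  "plur_score V c = length (filter (\<lambda>v. hd v = c) V)"

definition plurality :: "'c list \<Rightarrow> 'c list list \<Rightarrow> 'c" where
  "plurality tb V =
     hd (filter (\<lambda>c. \<forall>d\<in>set tb. plur_score V d \<le> plur_score V c) tb)"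

definition GS_manipulation :: "'c set \<Rightarrow> 'c list \<Rightarrow> 'c list list \<Rightarrow> nat \<Rightarrow> 'c list \<Rightarrow> bool" where
  "GS_manipulation C tb V i v' \<longleftrightarrow>
     i < length V \<and> is_vote C v' \<and>
     prefers (V ! i) (plurality tb (V[i := v'])) (plurality tb V) \<and>
     (\<forall>v''. is_vote C v'' \<longrightarrow>
        plurality tb (V[i := v'']) = plurality tb (V[i := v']) \<or>
        prefers (V ! i) (plurality tb (V[i := v'])) (plurality tb (V[i := v''])))"

definition GS_manipulator :: "'c set \<Rightarrow> 'c list \<Rightarrow> 'c list list \<Rightarrow> nat \<Rightarrow> bool" where
  "GS_manipulator C tb V i \<longleftrightarrow> (\<exists>v'. GS_manipulation C tb V i v')"

definition two_by_two_GS_game ::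
  "'c set \<Rightarrow> 'c list \<Rightarrow> 'c list list \<Rightarrow> nat \<Rightarrow> nat \<Rightarrow> 'c list \<Rightarrow> 'c list \<Rightarrow> bool" where
  "two_by_two_GS_game C tb V p1 p2 i1 i2 \<longleftrightarrow>
     p1 \<noteq> p2 \<and> {i. GS_manipulator C tb V i} = {p1, p2} \<and>
     GS_manipulation C tb V p1 i1 \<and> GS_manipulation C tb V p2 i2"

definition game_winner :: "'c list \<Rightarrow> 'c list list \<Rightarrow> nat \<Rightarrow> nat \<Rightarrow> 'c list \<Rightarrow> 'c list \<Rightarrow> 'c" where
  "game_winner tb V p1 p2 a b = plurality tb (V[p1 := a, p2 := b])"

datatype rho = RPos | RZero | RNeg

definition rho_of :: "'c list \<Rightarrow> 'c \<Rightarrow> 'c \<Rightarrow> rho" where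
  "rho_of v x y = (if x = y then RZero else if prefers v x y then RPos else RNeg)"

definition rho1 :: "'c list \<Rightarrow> 'c list list \<Rightarrow> nat \<Rightarrow> nat \<Rightarrow> 'c list \<Rightarrow> 'c list \<Rightarrow> rho" where
  "rho1 tb V p1 p2 i1 i2 =
     rho_of (V ! p1) (game_winner tb V p1 p2 i1 i2) (game_winner tb V p1 p2 (V ! p1) i2)"

definition rho2 :: "'c list \<Rightarrow> 'c list list \<Rightarrow> nat \<Rightarrow> nat \<Rightarrow> 'c list \<Rightarrow> 'c list \<Rightarrow> rho" where
  "rho2 tb V p1 p2 i1 i2 =
     rho_of (V ! p2) (game_winner tb V p1 p2 i1 i2) (game_winner tb V p1 p2 i1 (V ! p2))"

datatype game_type = Type_i | Type_ii | Type_iii | Type_iv | Type_v | Type_vi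

fun type_of_pair :: "rho \<Rightarrow> rho \<Rightarrow> game_type" where
  "type_of_pair RPos RPos = Type_i"
| "type_of_pair RNeg RNeg = Type_ii"
| "type_of_pair RZero RZero = Type_iii"
| "type_of_pair RPos RZero = Type_iv"
| "type_of_pair RZero RPos = Type_iv"
| "type_of_pair RNeg RZero = Type_v"
| "type_of_pair RZero RNeg = Type_v"
| "type_of_pair RPos RNeg = Type_vi"
| "type_of_pair RNeg RPos = Type_vi"

definition GS_game_type :: "'c list \<Rightarrow> 'c list list \<Rightarrow> nat \<Rightarrow> nat \<Rightarrow> 'c list \<Rightarrow> 'c list \<Rightarrow> game_type" where
  "GS_game_type tb V p1 p2 i1 i2 = type_of_pair (rho1 tb V p1 p2 i1 i2) (rho2 tb V p1 p2 i1 i2)"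

end

theory Submission
  imports Defs
begin

(* A GS-manipulation of voter p only matters through its first choice b: it moves p's point
   from its sincere first choice a to b, and b becomes the winner, while a and b both differ
   from the sincere winner w. When both players deviate, only the scores of b1 and b2 grow and
   that of w is untouched, so the joint winner is b1, b2 or w. In the first two cases one of the
   players is indifferent to his own deviation (rho = 0). The winner can only stay w if each
   deviation removes exactly the point the other one gains, i.e. b1 = a2 and b2 = a1; then each
   player is back at w instead of his top choice, so both rho are negative. Hence a pair
   containing + is always paired with 0, excluding types (i) and (vi). The remaining types are
   realized by small explicit profiles. *)

lemma prefers_Nil [simp]: "\<not> prefers [] a b"
  by (simp add: prefers_def)

lemma prefers_Cons [simp]:
  "prefers (x # xs) a b \<longleftrightarrow> (a = x \<and> b \<in> set xs) \<or> prefers xs a b"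
proof
  assume "prefers (x # xs) a b"
  then obtain j k where jk: "j < k" "k < length (x # xs)" "(x # xs) ! j = a" "(x # xs) ! k = b"
    unfolding prefers_def by blast
  then obtain k' where k': "k = Suc k'" by (cases k) auto
  show "(a = x \<and> b \<in> set xs) \<or> prefers xs a b"
  proof (cases j)
    case 0
    then show ?thesis using jk k' by auto
  next
    case (Suc j')
    then have "prefers xs a b" unfolding prefers_def using jk k'
      by (intro exI[of _ j'] exI[of _ k']) auto
    then show ?thesis by blast
  qed
next
  assume "(a = x \<and> b \<in> set xs) \<or> prefers xs a b"
  then show "prefers (x # xs) a b"
  proof
    assume h: "a = x \<and> b \<in> set xs"
    then obtain k where "k < length xs" "xs ! k = b" by (auto simp: in_set_conv_nth)
    then show ?thesis unfolding prefers_def using h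
      by (intro exI[of _ 0] exI[of _ "Suc k"]) auto
  next
    assume "prefers xs a b"
    then obtain j k where "j < k" "k < length xs" "xs ! j = a" "xs ! k = b"
      unfolding prefers_def by blast
    then show ?thesis unfolding prefers_def
      by (intro exI[of _ "Suc j"] exI[of _ "Suc k"]) auto
  qed
qed

lemma prefers_asym: "distinct v \<Longrightarrow> prefers v x y \<Longrightarrow> \<not> prefers v y x"
  unfolding prefers_def by (metis nth_eq_iff_index_eq order.asym order.strict_trans)

lemma prefers_irrefl: "distinct v \<Longrightarrow> \<not> prefers v x x"
  unfolding prefers_def by (metis nth_eq_iff_index_eq order.irrefl order.strict_trans)

lemma not_prefers_hd: "distinct v \<Longrightarrow> \<not> prefers v x (hd v)"
  unfolding prefers_def
  by (metis hd_conv_nth length_greater_0_conv nth_eq_iff_index_eq not_less0 order.strict_trans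
      list.size(3))

definition top_scorer :: "'c list \<Rightarrow> ('c \<Rightarrow> 'b::linorder) \<Rightarrow> 'c" where
  "top_scorer tb f = hd (filter (\<lambda>c. \<forall>d\<in>set tb. f d \<le> f c) tb)"

definition beats :: "'c list \<Rightarrow> ('c \<Rightarrow> 'b::linorder) \<Rightarrow> 'c \<Rightarrow> 'c \<Rightarrow> bool" where
  "beats tb f x y \<longleftrightarrow> f y < f x \<or> (f y = f x \<and> (x = y \<or> prefers tb x y))"

lemma plurality_eq_top_scorer: "plurality tb V = top_scorer tb (plur_score V)"
  by (simp add: plurality_def top_scorer_def)

lemma hd_filter_first:
  "x \<in> set xs \<Longrightarrow> P x \<Longrightarrow>
     hd (filter P xs) \<in> set xs \<and> P (hd (filter P xs)) \<and>
     (hd (filter P xs) = x \<or> prefers xs (hd (filter P xs)) x)"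
  by (induction xs) auto

lemma top_scorer_mem_beats:
  assumes "tb \<noteq> []"
  shows "top_scorer tb f \<in> set tb" and "d \<in> set tb \<Longrightarrow> beats tb f (top_scorer tb f) d"
proof -
  let ?P = "\<lambda>c. \<forall>d\<in>set tb. f d \<le> f c"
  have "Max (f ` set tb) \<in> f ` set tb" using assms by (intro Max_in) auto
  then obtain m where m: "m \<in> set tb" "f m = Max (f ` set tb)" by auto
  then have "?P m" by simp
  with hd_filter_first[OF m(1), of ?P]
  have top: "top_scorer tb f \<in> set tb" and max: "?P (top_scorer tb f)"
    unfolding top_scorer_def by auto
  then show "top_scorer tb f \<in> set tb" by blast
  assume d: "d \<in> set tb"
  show "beats tb f (top_scorer tb f) d"
  proof (cases "f d = f (top_scorer tb f)")
    case True
    with max have "?P d" by auto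
    with hd_filter_first[OF d, of ?P] True show ?thesis
      unfolding beats_def top_scorer_def by auto
  next
    case False
    then show ?thesis using max d unfolding beats_def by force
  qed
qed

lemma beats_antisym: "distinct tb \<Longrightarrow> beats tb f x y \<Longrightarrow> beats tb f y x \<Longrightarrow> x = y"
  unfolding beats_def using prefers_asym by fastforce

lemma beats_mono: "beats tb f x y \<Longrightarrow> f x \<le> g x \<Longrightarrow> g y \<le> f y \<Longrightarrow> beats tb g x y"
  unfolding beats_def by auto

lemma top_scorer_stable:
  assumes "distinct tb" "tb \<noteq> []"
    and "f (top_scorer tb f) \<le> g (top_scorer tb f)"
    and "g (top_scorer tb g) \<le> f (top_scorer tb g)"
  shows "top_scorer tb g = top_scorer tb f"
proof -
  have "beats tb g (top_scorer tb f) (top_scorer tb g)"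
    using beats_mono top_scorer_mem_beats assms(2-4) by metis
  moreover have "beats tb g (top_scorer tb g) (top_scorer tb f)"
    using top_scorer_mem_beats assms(2) by metis
  ultimately show ?thesis using beats_antisym assms(1) by metis
qed

lemma length_filter_list_update:
  "i < length xs \<Longrightarrow>
     length (filter P (xs[i := x])) + of_bool (P (xs ! i)) = length (filter P xs) + of_bool (P x)"
proof (induction xs arbitrary: i)
  case (Cons y ys)
  then show ?case by (cases i) auto
qed simp

lemma plur_score_list_update:
  "i < length V \<Longrightarrow>
     plur_score (V[i := v]) c + of_bool (hd (V ! i) = c) = plur_score V c + of_bool (hd v = c)"
  unfolding plur_score_def by (rule length_filter_list_update)

lemma plur_score_list_update_le: "c \<noteq> hd v \<Longrightarrow> plur_score (V[i := v]) c \<le> plur_score V c"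
  using plur_score_list_update[of i V v c] by (cases "i < length V") (auto simp: list_update_beyond)

lemma plur_score_list_update_ge: "c \<noteq> hd (V ! i) \<Longrightarrow> plur_score V c \<le> plur_score (V[i := v]) c"
  using plur_score_list_update[of i V v c] by (cases "i < length V") (auto simp: list_update_beyond)

lemma plurality_list_update_hd: "plurality tb (V[i := v]) = plurality tb (V[i := [hd v]])"
proof -
  have "plur_score (V[i := v]) = plur_score (V[i := [hd v]])"
    by (induction V arbitrary: i) (auto simp: plur_score_def fun_eq_iff split: nat.split)
  then show ?thesis unfolding plurality_def by simp
qed

section \<open>Shape of a single GS-manipulation\<close>

lemma valid_election_tie_breaking:
  assumes "valid_election C tb V"
  shows "distinct tb" "tb \<noteq> []"
  using assms unfolding valid_election_def is_vote_def by auto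

lemma valid_election_vote_distinct:
  assumes "valid_election C tb V" "p < length V"
  shows "distinct (V ! p)"
  using assms nth_mem[OF assms(2)] unfolding valid_election_def is_vote_def by blast

lemma GS_manipulation_first_choices:
  assumes val: "valid_election C tb V" and gs: "GS_manipulation C tb V p v'"
  shows "plurality tb (V[p := v']) = hd v'"
    and "hd (V ! p) \<noteq> plurality tb V"
    and "hd v' \<noteq> plurality tb V"
proof -
  have p: "p < length V"
    and better: "prefers (V ! p) (plurality tb (V[p := v'])) (plurality tb V)"
    using gs unfolding GS_manipulation_def by auto
  note tb = valid_election_tie_breaking[OF val]
    and Vp = valid_election_vote_distinct[OF val p]
  show sincere_top_loses: "hd (V ! p) \<noteq> plurality tb V" using better not_prefers_hd[OF Vp] by metis
  have changed: "plurality tb (V[p := v']) \<noteq> plurality tb V"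
    using better prefers_irrefl[OF Vp] by metis
  show winner: "plurality tb (V[p := v']) = hd v'"
  proof (rule ccontr)
    assume ne: "plurality tb (V[p := v']) \<noteq> hd v'"
    let ?f = "plur_score V" and ?g = "plur_score (V[p := v'])"
    have "?f (top_scorer tb ?f) \<le> ?g (top_scorer tb ?f)"
      by (rule plur_score_list_update_ge)
        (use sincere_top_loses in \<open>simp add: plurality_eq_top_scorer\<close>)
    moreover have "?g (top_scorer tb ?g) \<le> ?f (top_scorer tb ?g)"
      by (rule plur_score_list_update_le) (use ne in \<open>simp add: plurality_eq_top_scorer\<close>)
    ultimately have "plurality tb (V[p := v']) = plurality tb V"
      unfolding plurality_eq_top_scorer by (rule top_scorer_stable[OF tb])
    with changed show False ..
  qed
  show "hd v' \<noteq> plurality tb V" using winner changed by simp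
qed

section \<open>The joint deviation of two manipulators\<close>

context
  fixes C tb V p1 p2 i1 i2
  assumes val: "valid_election C tb V"
    and distinct_players: "p1 \<noteq> p2"
    and gs1: "GS_manipulation C tb V p1 i1"
    and gs2: "GS_manipulation C tb V p2 i2"
begin

lemma joint_winner_cases:
  "plurality tb (V[p1 := i1, p2 := i2]) \<in> {hd i1, hd i2, plurality tb V}"
proof -
  note tb = valid_election_tie_breaking[OF val]
  note M1 = GS_manipulation_first_choices[OF val gs1]
    and M2 = GS_manipulation_first_choices[OF val gs2]
  let ?f = "plur_score V" and ?f1 = "plur_score (V[p1 := i1])"
    and ?g = "plur_score (V[p1 := i1, p2 := i2])"
  let ?w = "plurality tb V" and ?W = "plurality tb (V[p1 := i1, p2 := i2])"
  have "?f ?w \<le> ?f1 ?w"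
    by (rule plur_score_list_update_ge) (use M1(2) in simp)
  also have "\<dots> \<le> ?g ?w"
    by (rule plur_score_list_update_ge) (use M2(2) distinct_players in simp)
  finally have f_le: "?f ?w \<le> ?g ?w" .
  show ?thesis
  proof (cases "?W \<in> {hd i1, hd i2}")
    case False
    then have "?g ?W \<le> ?f1 ?W" by (intro plur_score_list_update_le) simp
    also have "\<dots> \<le> ?f ?W" using False by (intro plur_score_list_update_le) simp
    finally have "?g ?W \<le> ?f ?W" .
    with f_le have "?W = ?w"
      unfolding plurality_eq_top_scorer by (rule top_scorer_stable[OF tb])
    then show ?thesis by simp
  qed auto
qed

(* The deviation of p1 alone makes hd i1 win; if the joint winner is the sincere winner,
   p2's deviation must have taken a point away from hd i1, so hd i1 is p2's first choice. *)
lemma joint_winner_sincere_imp: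
  assumes "plurality tb (V[p1 := i1, p2 := i2]) = plurality tb V"
  shows "hd i1 = hd (V ! p2)"
proof (rule ccontr)
  assume ne: "hd i1 \<noteq> hd (V ! p2)"
  note tb = valid_election_tie_breaking[OF val]
  note M1 = GS_manipulation_first_choices[OF val gs1]
    and M2 = GS_manipulation_first_choices[OF val gs2]
  let ?f1 = "plur_score (V[p1 := i1])" and ?g = "plur_score (V[p1 := i1, p2 := i2])"
  have "?f1 (hd i1) \<le> ?g (hd i1)"
    by (rule plur_score_list_update_ge) (use ne distinct_players in simp)
  moreover have "?g (plurality tb V) \<le> ?f1 (plurality tb V)"
    by (rule plur_score_list_update_le) (use M2(3) in simp)
  ultimately have "plurality tb (V[p1 := i1, p2 := i2]) = plurality tb (V[p1 := i1])"
    using M1(1) assms unfolding plurality_eq_top_scorer by (intro top_scorer_stable[OF tb]) simp_all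
  with assms M1(1,3) show False by simp
qed

end

lemma type_of_pair_RZero:
  "type_of_pair RZero r \<notin> {Type_i, Type_vi}" "type_of_pair r RZero \<notin> {Type_i, Type_vi}"
  by (cases r; simp)+

theorem GS_game_type_not_i_vi:
  assumes val: "valid_election C tb V" and game: "two_by_two_GS_game C tb V p1 p2 i1 i2"
  shows "GS_game_type tb V p1 p2 i1 i2 \<notin> {Type_i, Type_vi}"
proof -
  have ne: "p1 \<noteq> p2" and gs1: "GS_manipulation C tb V p1 i1" and gs2: "GS_manipulation C tb V p2 i2"
    using game unfolding two_by_two_GS_game_def by auto
  have p1: "p1 < length V" and p2: "p2 < length V"
    using gs1 gs2 unfolding GS_manipulation_def by auto
  note M1 = GS_manipulation_first_choices[OF val gs1]
    and M2 = GS_manipulation_first_choices[OF val gs2]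
  define W where "W = plurality tb (V[p1 := i1, p2 := i2])"
  have rho1: "rho1 tb V p1 p2 i1 i2 = rho_of (V ! p1) W (hd i2)"
    using M2(1) unfolding rho1_def game_winner_def W_def by simp
  have "V[p1 := i1, p2 := V ! p2] = V[p1 := i1]"
    using ne by (metis list_update_id nth_list_update_neq)
  then have rho2: "rho2 tb V p1 p2 i1 i2 = rho_of (V ! p2) W (hd i1)"
    using M1(1) unfolding rho2_def game_winner_def W_def by simp
  consider "W = hd i1" | "W = hd i2" | "W = plurality tb V"
    using joint_winner_cases[OF val ne gs1 gs2] unfolding W_def by blast
  then show ?thesis
  proof cases
    case 1
    then show ?thesis using rho2 type_of_pair_RZero by (simp add: GS_game_type_def rho_of_def)
  next
    case 2
    then show ?thesis using rho1 type_of_pair_RZero by (simp add: GS_game_type_def rho_of_def)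
  next
    case 3
    have swap: "hd i2 = hd (V ! p1)"
      using joint_winner_sincere_imp[OF val ne[symmetric] gs2 gs1] 3 ne
      unfolding W_def by (simp add: list_update_swap)
    have "hd i1 = hd (V ! p2)" using joint_winner_sincere_imp[OF val ne gs1 gs2] 3 W_def by simp
    then have "rho1 tb V p1 p2 i1 i2 = RNeg" "rho2 tb V p1 p2 i1 i2 = RNeg"
      using rho1 rho2 swap 3 M1(2) M2(2) unfolding rho_of_def
      by (auto simp: not_prefers_hd valid_election_vote_distinct[OF val p1] valid_election_vote_distinct[OF val p2])
    then show ?thesis by (simp add: GS_game_type_def)
  qed
qed

section \<open>Realizing types (ii)--(v)\<close>

(* Since only the first choice of a deviation matters, being a GS-manipulation is decided
   by a check over candidates instead of over all votes. *)
definition deviation_winner :: "'c list \<Rightarrow> 'c list list \<Rightarrow> nat \<Rightarrow> 'c \<Rightarrow> 'c" where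
  "deviation_winner tb V i c = plurality tb (V[i := [c]])"

definition GS_first_choice :: "'c set \<Rightarrow> 'c list \<Rightarrow> 'c list list \<Rightarrow> nat \<Rightarrow> 'c \<Rightarrow> bool" where
  "GS_first_choice C tb V i c \<longleftrightarrow>
     prefers (V ! i) (deviation_winner tb V i c) (plurality tb V) \<and>
     (\<forall>c'\<in>C. deviation_winner tb V i c' = deviation_winner tb V i c \<or>
        prefers (V ! i) (deviation_winner tb V i c) (deviation_winner tb V i c'))"

definition has_GS_first_choice :: "'c set \<Rightarrow> 'c list \<Rightarrow> 'c list list \<Rightarrow> nat \<Rightarrow> bool" where
  "has_GS_first_choice C tb V i \<longleftrightarrow> (\<exists>c\<in>C. GS_first_choice C tb V i c)"

lemma is_vote_move_to_front: "is_vote C tb \<Longrightarrow> c \<in> C \<Longrightarrow> is_vote C (c # filter (\<lambda>x. x \<noteq> c) tb)"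
  unfolding is_vote_def by auto

lemma all_votes_iff_all_first_choices:
  assumes "valid_election C tb V"
  shows "(\<forall>v. is_vote C v \<longrightarrow> P (hd v)) \<longleftrightarrow> (\<forall>c\<in>C. P c)"
    and "(\<exists>v. is_vote C v \<and> P (hd v)) \<longleftrightarrow> (\<exists>c\<in>C. P c)"
proof -
  have tb: "is_vote C tb" and hd_mem: "\<And>v. is_vote C v \<Longrightarrow> hd v \<in> C"
    using assms unfolding valid_election_def is_vote_def by (auto intro: hd_in_set)
  show "(\<forall>v. is_vote C v \<longrightarrow> P (hd v)) \<longleftrightarrow> (\<forall>c\<in>C. P c)"
    and "(\<exists>v. is_vote C v \<and> P (hd v)) \<longleftrightarrow> (\<exists>c\<in>C. P c)"
    using hd_mem is_vote_move_to_front[OF tb] by (metis list.sel(1))+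
qed

lemma GS_manipulation_iff_first_choice:
  assumes val: "valid_election C tb V"
  shows "GS_manipulation C tb V i v \<longleftrightarrow>
           i < length V \<and> is_vote C v \<and> GS_first_choice C tb V i (hd v)"
proof -
  have winner: "plurality tb (V[i := v']) = deviation_winner tb V i (hd v')" for v'
    unfolding deviation_winner_def by (rule plurality_list_update_hd)
  show ?thesis
    unfolding GS_manipulation_def GS_first_choice_def winner
    using all_votes_iff_all_first_choices(1)[OF val, of "\<lambda>c.
        deviation_winner tb V i c = deviation_winner tb V i (hd v) \<or>
        prefers (V ! i) (deviation_winner tb V i (hd v)) (deviation_winner tb V i c)"]
    by simp
qed

lemma GS_manipulator_iff_has_first_choice:
  assumes val: "valid_election C tb V"
  shows "GS_manipulator C tb V i \<longleftrightarrow> i < length V \<and> has_GS_first_choice C tb V i"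
  unfolding GS_manipulator_def GS_manipulation_iff_first_choice[OF val] has_GS_first_choice_def
  using all_votes_iff_all_first_choices(2)[OF val, of "GS_first_choice C tb V i"] by simp

lemma two_by_two_GS_game_by_first_choices:
  assumes val: "valid_election C tb V"
    and players: "filter (has_GS_first_choice C tb V) [0..<length V] = [p1, p2]"
    and "is_vote C i1" "GS_first_choice C tb V p1 (hd i1)"
    and "is_vote C i2" "GS_first_choice C tb V p2 (hd i2)"
  shows "two_by_two_GS_game C tb V p1 p2 i1 i2"
proof -
  have "{i. GS_manipulator C tb V i} = set [p1, p2]"
    unfolding players[symmetric] GS_manipulator_iff_has_first_choice[OF val] by auto
  moreover have "p1 \<noteq> p2" using arg_cong[OF players, of distinct] by simp
  moreover have "p1 < length V" "p2 < length V"
    using arg_cong[OF players, of set] by auto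
  ultimately show ?thesis
    using assms(3-) unfolding two_by_two_GS_game_def GS_manipulation_iff_first_choice[OF val]
    by simp
qed

lemmas realization_simps =
  valid_election_def is_vote_def has_GS_first_choice_def GS_first_choice_def deviation_winner_def plurality_def
  plur_score_def GS_game_type_def rho1_def rho2_def rho_of_def game_winner_def upt_rec

lemma type_ii_realizable:
  "\<exists>(C::nat set) tb V p1 p2 i1 i2. valid_election C tb V \<and>
     two_by_two_GS_game C tb V p1 p2 i1 i2 \<and> GS_game_type tb V p1 p2 i1 i2 = Type_ii"
proof -
  let ?C = "{0, 1, 2 :: nat}" and ?tb = "[0, 1, 2 :: nat]" and ?V = "[[2,1,0], [0,1,2], [1,2,0 :: nat]]"
  have val: "valid_election ?C ?tb ?V" by (simp add: realization_simps insert_commute)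
  have "two_by_two_GS_game ?C ?tb ?V 0 2 [1,0,2] [2,0,1]"
    by (rule two_by_two_GS_game_by_first_choices[OF val])
      (simp_all add: realization_simps insert_commute)
  moreover have "GS_game_type ?tb ?V 0 2 [1,0,2] [2,0,1] = Type_ii"
    by (simp add: realization_simps)
  ultimately show ?thesis using val by blast
qed

lemma type_iii_realizable:
  "\<exists>(C::nat set) tb V p1 p2 i1 i2. valid_election C tb V \<and>
     two_by_two_GS_game C tb V p1 p2 i1 i2 \<and> GS_game_type tb V p1 p2 i1 i2 = Type_iii"
proof -
  let ?C = "{0, 1, 2 :: nat}" and ?tb = "[0, 1, 2 :: nat]" and ?V = "[[1,2,0], [2,0,1], [2,0,1], [1,0,2], [0,1,2 :: nat]]"
  have val: "valid_election ?C ?tb ?V" by (simp add: realization_simps insert_commute)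
  have "two_by_two_GS_game ?C ?tb ?V 1 2 [0,1,2] [0,1,2]"
    by (rule two_by_two_GS_game_by_first_choices[OF val])
      (simp_all add: realization_simps insert_commute)
  moreover have "GS_game_type ?tb ?V 1 2 [0,1,2] [0,1,2] = Type_iii"
    by (simp add: realization_simps)
  ultimately show ?thesis using val by blast
qed

lemma type_iv_realizable:
  "\<exists>(C::nat set) tb V p1 p2 i1 i2. valid_election C tb V \<and>
     two_by_two_GS_game C tb V p1 p2 i1 i2 \<and> GS_game_type tb V p1 p2 i1 i2 = Type_iv"
proof -
  let ?C = "{0, 1, 2, 3 :: nat}" and ?tb = "[0, 1, 2, 3 :: nat]" and ?V = "[[2,0,3,1], [0,2,1,3], [1,2,0,3], [3,0,2,1], [3,1,2,0], [2,0,1,3 :: nat]]"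
  have val: "valid_election ?C ?tb ?V" by (simp add: realization_simps insert_commute)
  have "two_by_two_GS_game ?C ?tb ?V 3 4 [0,1,2,3] [1,0,2,3]"
    by (rule two_by_two_GS_game_by_first_choices[OF val])
      (simp_all add: realization_simps insert_commute)
  moreover have "GS_game_type ?tb ?V 3 4 [0,1,2,3] [1,0,2,3] = Type_iv"
    by (simp add: realization_simps)
  ultimately show ?thesis using val by blast
qed

lemma type_v_realizable:
  "\<exists>(C::nat set) tb V p1 p2 i1 i2. valid_election C tb V \<and>
     two_by_two_GS_game C tb V p1 p2 i1 i2 \<and> GS_game_type tb V p1 p2 i1 i2 = Type_v"
proof -
  let ?C = "{0, 1, 2, 3 :: nat}" and ?tb = "[0, 1, 2, 3 :: nat]" and ?V = "[[3,2,1,0], [2,0,3,1], [1,2,0,3 :: nat]]"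
  have val: "valid_election ?C ?tb ?V" by (simp add: realization_simps insert_commute)
  have "two_by_two_GS_game ?C ?tb ?V 0 1 [2,0,1,3] [0,1,2,3]"
    by (rule two_by_two_GS_game_by_first_choices[OF val])
      (simp_all add: realization_simps insert_commute)
  moreover have "GS_game_type ?tb ?V 0 1 [2,0,1,3] [0,1,2,3] = Type_v"
    by (simp add: realization_simps)
  ultimately show ?thesis using val by blast
qed

theorem mainTheorem5:
  shows "(\<forall>T\<in>{Type_ii, Type_iii, Type_iv, Type_v}.
            \<exists>(C::nat set) tb V p1 p2 i1 i2.
              valid_election C tb V \<and> two_by_two_GS_game C tb V p1 p2 i1 i2 \<and>
              GS_game_type tb V p1 p2 i1 i2 = T)
       \<and> (\<forall>(C::'c set) tb V p1 p2 i1 i2.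
              valid_election C tb V \<and> two_by_two_GS_game C tb V p1 p2 i1 i2 \<longrightarrow>
              GS_game_type tb V p1 p2 i1 i2 \<notin> {Type_i, Type_vi})"
  using type_ii_realizable type_iii_realizable type_iv_realizable type_v_realizable
    GS_game_type_not_i_vi
  by blast

end
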